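(* Assume $\bar p=\mu\cdot\mathbf p=1/2$ and let $\mathbf r,\tilde{\mathbf r}$ be as in the context. Then $\mathbf r+\tilde{\mathbf r}=(\mu\cdot(\mathbf r+\tilde{\mathbf r}))\mathbf 1$; in particular $\mathbf r+\tilde{\mathbf r}$ is a constant multiple of $\mathbf 1$.
   Context: Let $\mathcal R=\{1,\dots,N\}$ and let $K$ be a stochastic matrix on $\mathcal R$ whose Markov chain has a unique closed irreducible subset; let $\mu$ (row vector) be its unique stationary distribution. Fix $p:\mathcal R\to(0,1)$, $\mathbf p=(p(1),\dots,p(N))^t$, $\mathbf 1$ the all-ones column vector, $I$ the identity, $D_p$ the diagonal matrix with entries $p(i)$, $D_{1-p}=I-D_p$. Define $\mathbf r=(I-K+2(\mathbf 1-\mathbf p)\mu D_{1-p}K)^{-1}\mathbf p-\mathbf 1$ and $\tilde{\mathbf r}=(I-K+2\mathbf p\,\mu D_pK)^{-1}(\mathbf 1-\mathbf p)-\mathbf 1$. *)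

theory Defs
  imports "HOL-Analysis.Analysis"
begin

definition stochastic :: "real^'n^'n \<Rightarrow> bool" where
  "stochastic K \<longleftrightarrow> (\<forall>i j. K$i$j \<ge> 0) \<and> (\<forall>i. (\<Sum>j\<in>UNIV. K$i$j) = 1)"

definition trans_rel :: "real^'n^'n \<Rightarrow> ('n \<times> 'n) set" where
  "trans_rel K = {(i,j). K$i$j > 0}"

definition closed_irreducible :: "real^'n^'n \<Rightarrow> 'n set \<Rightarrow> bool" where
  "closed_irreducible K C \<longleftrightarrow> C \<noteq> {} \<and>
     (\<forall>i\<in>C. \<forall>j. K$i$j > 0 \<longrightarrow> j \<in> C) \<and>
     (\<forall>i\<in>C. \<forall>j\<in>C. (i,j) \<in> (trans_rel K)\<^sup>*)"

definition stationary_distribution :: "real^'n^'n \<Rightarrow> real^'n \<Rightarrow> bool" where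
  "stationary_distribution K mu \<longleftrightarrow> (\<forall>i. mu$i \<ge> 0) \<and> (\<Sum>i\<in>UNIV. mu$i) = 1 \<and> mu v* K = mu"

definition diag_mat :: "real^'n \<Rightarrow> real^'n^'n" where
  "diag_mat v = (\<chi> i j. if i = j then v$i else 0)"

definition outer :: "real^'n \<Rightarrow> real^'n \<Rightarrow> real^'n^'n" where
  "outer u w = (\<chi> i j. u$i * w$j)"

definition ones :: "real^'n" where "ones = (\<chi> i. 1)"

definition r_vec :: "real^'n^'n \<Rightarrow> real^'n \<Rightarrow> real^'n \<Rightarrow> real^'n" where
  "r_vec K mu p = matrix_inv (mat 1 - K + 2 *\<^sub>R outer (ones - p) (mu v* (diag_mat (ones - p) ** K))) *v p - ones"

definition r_tilde_vec :: "real^'n^'n \<Rightarrow> real^'n \<Rightarrow> real^'n \<Rightarrow> real^'n" where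
  "r_tilde_vec K mu p = matrix_inv (mat 1 - K + 2 *\<^sub>R outer p (mu v* (diag_mat p ** K))) *v (ones - p) - ones"

end

theory Submission
  imports Defs
begin

text \<open>For q with \<open>\<mu> \<bullet> q = 1/2\<close> write \<open>L\<^sub>q = I - K + 2 (1 - q) \<mu> D\<^sub>1\<^sub>-\<^sub>q K\<close>, so that \<open>r\<close> uses \<open>L\<^sub>p\<close> and
  \<open>r\<tilde>\<close> uses \<open>L\<^sub>1\<^sub>-\<^sub>p\<close>. Pairing \<open>L\<^sub>q x = q\<close> with the stationary \<open>\<mu>\<close> shows that the rank-one
  term contributes exactly \<open>1 - q\<close>, so \<open>x = L\<^sub>q\<^sup>-\<^sup>1 q\<close> solves the Poisson equation
  \<open>(I - K) x = 2q - 1\<close>. The right-hand sides for \<open>q = p\<close> and \<open>q = 1 - p\<close> cancel, so the sum of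
  the two solutions is harmonic, and by the maximum principle a harmonic vector of a chain with a
  unique closed class is constant.\<close>

lemma outer_mult_vec: "outer u w *v x = (w \<bullet> x) *\<^sub>R u"
  by (simp add: vec_eq_iff matrix_vector_mult_def outer_def inner_vec_def sum_distrib_left
      mult.commute mult.left_commute)

lemma diag_mat_mult_vec: "diag_mat v *v x = (\<chi> i. v$i * x$i)"
  by (simp add: vec_eq_iff matrix_vector_mult_def diag_mat_def if_distrib[where f="\<lambda>a. a * _"]
      cong: if_cong)

lemma stochastic_mult_ones: "stochastic K \<Longrightarrow> K *v ones = ones"
  by (simp add: vec_eq_iff matrix_vector_mult_def ones_def stochastic_def)

lemma stationary_inner_ones: "stationary_distribution K mu \<Longrightarrow> mu \<bullet> ones = 1"
  by (simp add: stationary_distribution_def inner_vec_def ones_def)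

lemma stationary_inner_mult_vec: "stationary_distribution K mu \<Longrightarrow> mu \<bullet> (K *v x) = mu \<bullet> x"
  by (metis dot_lmul_matrix stationary_distribution_def)

lemma matrix_mul_matrix_inv_right:
  fixes A :: "'a::field^'n^'n"
  assumes "invertible A"
  shows "A ** matrix_inv A = mat 1"
  using assms unfolding invertible_def matrix_inv_def by (rule someI2_ex) auto

lemma harmonic_argmax_step:
  fixes K :: "real^'n^'n"
  assumes "stochastic K" and "K *v z = z" and "\<forall>j. z$j \<le> z$i" and "K$i$j > 0"
  shows "z$j = z$i"
proof -
  have "(\<Sum>k\<in>UNIV. K$i$k * (z$i - z$k)) = z$i * (\<Sum>k\<in>UNIV. K$i$k) - (K *v z)$i"
    by (simp add: algebra_simps sum_subtractf sum_distrib_left matrix_vector_mult_def)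
  also have "\<dots> = 0"
    using assms(1,2) by (simp add: stochastic_def)
  finally have "\<forall>k\<in>UNIV. K$i$k * (z$i - z$k) = 0"
    using assms(1,3) by (subst sum_nonneg_eq_0_iff[symmetric]) (auto simp: stochastic_def)
  with assms(4) show ?thesis by (metis UNIV_I eq_iff_diff_eq_0 mult_eq_0_iff order_less_irrefl)
qed

definition closed_under :: "real^'n^'n \<Rightarrow> 'n set \<Rightarrow> bool" where
  "closed_under K S \<longleftrightarrow> (\<forall>i\<in>S. \<forall>j. K$i$j > 0 \<longrightarrow> j \<in> S)"

lemma closed_under_rtrancl:
  assumes "closed_under K S" and "(i,j) \<in> (trans_rel K)\<^sup>*" and "i \<in> S"
  shows "j \<in> S"
  using assms(2,3) by induction (use assms(1) in \<open>auto simp: closed_under_def trans_rel_def\<close>)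

text \<open>A state of S whose reachable set is smallest reaches back from everything it reaches.\<close>
lemma closed_under_obtains_closed_irreducible:
  fixes K :: "real^'n^'n"
  assumes "closed_under K S" and "S \<noteq> {}"
  obtains C where "C \<subseteq> S" and "closed_irreducible K C"
proof -
  define reach where "reach i = {j. (i,j) \<in> (trans_rel K)\<^sup>*}" for i
  obtain i where "i \<in> S" and minimal: "\<And>j. j \<in> S \<Longrightarrow> card (reach i) \<le> card (reach j)"
    using ex_has_least_nat[of "\<lambda>j. j \<in> S" _ "\<lambda>j. card (reach j)"] assms(2) by blast
  have "reach i \<subseteq> S"
    using closed_under_rtrancl[OF assms(1) _ \<open>i \<in> S\<close>] by (auto simp: reach_def)
  have reach_eq: "reach j = reach i" if "j \<in> reach i" for j
  proof -
    have "reach j \<subseteq> reach i" using that by (auto simp: reach_def)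
    moreover have "card (reach i) \<le> card (reach j)" using minimal \<open>reach i \<subseteq> S\<close> that by auto
    ultimately show ?thesis by (metis card_seteq finite)
  qed
  have "closed_irreducible K (reach i)"
    unfolding closed_irreducible_def
  proof (intro conjI ballI allI impI)
    show "reach i \<noteq> {}" by (auto simp: reach_def)
  next
    fix a b assume "a \<in> reach i" "K$a$b > 0"
    then show "b \<in> reach i"
      by (auto simp: reach_def trans_rel_def intro: rtrancl_into_rtrancl)
  next
    fix a b assume "a \<in> reach i" "b \<in> reach i"
    then show "(a,b) \<in> (trans_rel K)\<^sup>*" using reach_eq by (auto simp: reach_def)
  qed
  with \<open>reach i \<subseteq> S\<close> show ?thesis using that by blast
qed

lemma harmonic_argmax_closed_under:
  fixes K :: "real^'n^'n"
  assumes "stochastic K" and "K *v z = z"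
  shows "closed_under K {i. \<forall>j. z$j \<le> z$i}"
  unfolding closed_under_def
proof (intro ballI allI impI)
  fix i j assume "i \<in> {i. \<forall>j. z$j \<le> z$i}" and "K$i$j > 0"
  then have "\<forall>k. z$k \<le> z$i" and "z$j = z$i"
    using harmonic_argmax_step[OF assms, of i j] by simp_all
  then show "j \<in> {i. \<forall>k. z$k \<le> z$i}" by simp
qed

lemma harmonic_argmax_nonempty: "{i. \<forall>j. z$j \<le> z$i} \<noteq> {}"
  for z :: "real^'n"
proof -
  have "Max (range (\<lambda>j. z$j)) \<in> range (\<lambda>j. z$j)"
    by (rule Max_in) auto
  then obtain i where "z$i = Max (range (\<lambda>j. z$j))" by (metis rangeE)
  then have "\<forall>j. z$j \<le> z$i" by simp
  then show ?thesis by blast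
qed

text \<open>Maximum principle: the argmax and the argmin of a harmonic vector both contain
  a closed irreducible class, which by uniqueness is the same one.\<close>
lemma harmonic_vector_constant:
  fixes K :: "real^'n^'n"
  assumes "stochastic K" and "\<exists>!C. closed_irreducible K C" and "K *v z = z"
  obtains c where "z = c *\<^sub>R ones"
proof -
  have "K *v (-z) = -z"
    using assms(3) by (metis matrix_vector_mult_scaleR scaleR_minus1_left)
  obtain C where "C \<subseteq> {i. \<forall>j. z$j \<le> z$i}" and "closed_irreducible K C"
    using closed_under_obtains_closed_irreducible[OF harmonic_argmax_closed_under[OF assms(1,3)]
        harmonic_argmax_nonempty] .
  moreover obtain C' where "C' \<subseteq> {i. \<forall>j. (-z)$j \<le> (-z)$i}" and "closed_irreducible K C'"
    using closed_under_obtains_closed_irreducible[OF harmonic_argmax_closed_under[OF assms(1)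
        \<open>K *v (-z) = -z\<close>] harmonic_argmax_nonempty] .
  moreover have "C' = C"
    using assms(2) \<open>closed_irreducible K C\<close> \<open>closed_irreducible K C'\<close> by blast
  moreover obtain c where "c \<in> C"
    using \<open>closed_irreducible K C\<close> by (auto simp: closed_irreducible_def)
  ultimately have "\<forall>j. z$j \<le> z$c" and "\<forall>j. (-z)$j \<le> (-z)$c"
    by blast+
  then have "\<forall>j. z$j = z$c" by (simp add: order_antisym)
  then have "z = (z$c) *\<^sub>R ones" by (simp add: vec_eq_iff ones_def)
  then show ?thesis by (rule that)
qed

definition corrector_matrix :: "real^'n^'n \<Rightarrow> real^'n \<Rightarrow> real^'n \<Rightarrow> real^'n^'n" where
  "corrector_matrix K mu q =
     mat 1 - K + 2 *\<^sub>R outer (ones - q) (mu v* (diag_mat (ones - q) ** K))"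

lemma corrector_matrix_mult_vec:
  "corrector_matrix K mu q *v x =
     x - K *v x + (2 * (mu \<bullet> (diag_mat (ones - q) *v (K *v x)))) *\<^sub>R (ones - q)"
  by (simp add: corrector_matrix_def matrix_vector_mult_diff_rdistrib
      matrix_vector_mult_add_rdistrib outer_mult_vec dot_lmul_matrix matrix_vector_mul_assoc
      flip: scaleR_matrix_vector_assoc)

lemma r_vec_eq_corrector: "r_vec K mu p = matrix_inv (corrector_matrix K mu p) *v p - ones"
  by (simp add: r_vec_def corrector_matrix_def)

lemma r_tilde_vec_eq_corrector:
  "r_tilde_vec K mu p = matrix_inv (corrector_matrix K mu (ones - p)) *v (ones - p) - ones"
  by (simp add: r_tilde_vec_def corrector_matrix_def)

lemma inner_corrector_matrix_mult_vec:
  assumes "stationary_distribution K mu" and "mu \<bullet> q = 1/2"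
  shows "mu \<bullet> (corrector_matrix K mu q *v x) = mu \<bullet> (diag_mat (ones - q) *v (K *v x))"
proof -
  have "mu \<bullet> (ones - q) = 1/2"
    using assms by (simp add: stationary_inner_ones inner_diff_right)
  then show ?thesis
    using assms(1) by (simp add: corrector_matrix_mult_vec inner_add_right inner_diff_right
        stationary_inner_mult_vec)
qed

text \<open>Pairing \<open>L\<^sub>q x = 0\<close> with \<open>\<mu>\<close> shows that the rank-one term vanishes, so x is harmonic,
  hence a constant c; but then the rank-one term has weight c/2.\<close>
lemma corrector_matrix_invertible:
  fixes K :: "real^'n^'n"
  assumes "stochastic K" and "\<exists>!C. closed_irreducible K C"
    and "stationary_distribution K mu" and "mu \<bullet> q = 1/2"
  shows "invertible (corrector_matrix K mu q)"
proof -
  have "x = 0" if "corrector_matrix K mu q *v x = 0" for x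
  proof -
    have weight: "mu \<bullet> (diag_mat (ones - q) *v (K *v x)) = 0"
      using inner_corrector_matrix_mult_vec[OF assms(3,4), of x] that by simp
    then have "K *v x = x"
      using that by (simp add: corrector_matrix_mult_vec)
    then obtain c where c: "x = c *\<^sub>R ones"
      using harmonic_vector_constant[OF assms(1,2)] by blast
    have "K *v x = c *\<^sub>R ones"
      by (simp add: c matrix_vector_mult_scaleR stochastic_mult_ones[OF assms(1)])
    then have "diag_mat (ones - q) *v (K *v x) = c *\<^sub>R (ones - q)"
      by (simp add: diag_mat_mult_vec vec_eq_iff ones_def)
    then have "c / 2 = 0"
      using weight assms(3,4) by (simp add: stationary_inner_ones inner_diff_right)
    then show "x = 0" by (simp add: c)
  qed
  then show ?thesis
    using invertible_left_inverse matrix_left_invertible_ker by blast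
qed

lemma corrector_poisson_equation:
  fixes K :: "real^'n^'n"
  assumes "stochastic K" and "\<exists>!C. closed_irreducible K C"
    and "stationary_distribution K mu" and "mu \<bullet> q = 1/2"
    and x: "x = matrix_inv (corrector_matrix K mu q) *v q"
  shows "x - K *v x = 2 *\<^sub>R q - ones"
proof -
  have Lx: "corrector_matrix K mu q *v x = q"
    using matrix_mul_matrix_inv_right[OF corrector_matrix_invertible[OF assms(1-4)]]
    by (simp add: x matrix_vector_mul_assoc)
  then have "2 * (mu \<bullet> (diag_mat (ones - q) *v (K *v x))) = 1"
    using inner_corrector_matrix_mult_vec[OF assms(3,4), of x] assms(4) by simp
  then have "x - K *v x + (ones - q) = q"
    using Lx by (simp only: corrector_matrix_mult_vec scaleR_one)
  then show ?thesis
    by (simp add: algebra_simps scaleR_2)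
qed

theorem lemma4p4:
  fixes K :: "real^'n^'n" and mu p :: "real^'n"
  assumes "stochastic K"
    and "\<exists>!C. closed_irreducible K C"
    and "stationary_distribution K mu"
    and "\<forall>i. 0 < p$i \<and> p$i < 1"
    and "mu \<bullet> p = 1/2"
  shows "r_vec K mu p + r_tilde_vec K mu p = (mu \<bullet> (r_vec K mu p + r_tilde_vec K mu p)) *\<^sub>R ones"
proof -
  define x where "x = matrix_inv (corrector_matrix K mu p) *v p"
  define y where "y = matrix_inv (corrector_matrix K mu (ones - p)) *v (ones - p)"
  have "mu \<bullet> (ones - p) = 1/2"
    using assms(3,5) by (simp add: stationary_inner_ones inner_diff_right)
  have "(x + y) - K *v (x + y) = (x - K *v x) + (y - K *v y)"
    by (simp add: matrix_vector_right_distrib)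
  also have "\<dots> = (2 *\<^sub>R p - ones) + (2 *\<^sub>R (ones - p) - ones)"
    using corrector_poisson_equation[OF assms(1-3,5) x_def]
      corrector_poisson_equation[OF assms(1-3) \<open>mu \<bullet> (ones - p) = 1/2\<close> y_def] by simp
  also have "\<dots> = 0"
    by (simp add: scaleR_right_diff_distrib scaleR_2)
  finally have "K *v (x + y) = x + y"
    by simp
  then obtain c where "x + y = c *\<^sub>R ones"
    using harmonic_vector_constant[OF assms(1,2)] by blast
  then have "r_vec K mu p + r_tilde_vec K mu p = (c - 2) *\<^sub>R ones"
    by (simp add: r_vec_eq_corrector r_tilde_vec_eq_corrector flip: x_def y_def)
      (simp add: vec_eq_iff ones_def algebra_simps)
  then show ?thesis
    using stationary_inner_ones[OF assms(3)] by simp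
qed

end
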